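(* Consider the algorithm described in the context, and suppose it does not terminate finitely. Then for all $k\ge1$, $0<\tau_k\le\tau_{k-1}$.
   Context: Problem: $\min_{x\in\mathbb{R}^n} f(x)+r(x)$ subject to $c(x)=0$, where $f:\mathbb{R}^n\to\mathbb{R}$ and $c:\mathbb{R}^n\to\mathbb{R}^m$ ($m\le n$) are continuously differentiable and $r:\mathbb{R}^n\to\mathbb{R}_{\ge 0}$ is convex. Write $g(x)=\nabla f(x)$, $J(x)=\nabla c(x)^T$, and $f_k=f(x_k)$, $g_k=g(x_k)$, $c_k=c(x_k)$, $J_k=J(x_k)$, $r_k=r(x_k)$. All norms are Euclidean. Merit function: $\Phi_\tau(x)=\tau(f(x)+r(x))+\|c(x)\|_2$. Algorithm: inputs $x_0$, $\alpha_0>0$, $\tau_{-1}>0$; constants $\kappa_v>0$, $\sigma_c,\epsilon_\tau,\xi,\eta\in(0,1)$, $\sigma_u\in(0,1/2]$, $\bar\sigma_u:=\sigma_u+\tfrac12$. For $k=0,1,\dots$: 1. If $J_k^Tc_k\ne0$, compute $v_k$ with $v_k\in\mathrm{Range}(J_k^T)$, $\|v_k\|_2\le\kappa_v\alpha_k\|J_k^Tc_k\|_2$, $\|c_k+J_kv_k\|_2\le\|c_k+J_kv_k^c\|_2$, where $v_k^c=-\beta_k^cJ_k^Tc_k$ with $\beta_k^c$ minimizing $\tfrac12\|c_k-\beta J_kJ_k^Tc_k\|_2^2$ over $0\le\beta\le\kappa_v\alpha_k$. Otherwise set $v_k=0$, and if $c_k\ne0$ terminate. 2. Let $u_k$ be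 the unique minimizer of $g_k^Tu+\tfrac1{2\alpha_k}\|u\|_2^2+r(x_k+v_k+u)$ subject to $J_ku=0$; set $s_k=v_k+u_k$. If $s_k=0$, terminate. 3. Let $D_k:=g_k^Ts_k+\bar\sigma_u\|s_k\|_2^2/\alpha_k+r(x_k+s_k)-r_k$; $\tau_{k,\mathrm{trial}}=\infty$ if $D_k\le0$, else $\tau_{k,\mathrm{trial}}=(1-\sigma_c)(\|c_k\|_2-\|c_k+J_kv_k\|_2)/D_k$. Set $\tau_k=\tau_{k-1}$ if $\tau_{k-1}\le\tau_{k,\mathrm{trial}}$, else $\tau_k=\min\{(1-\epsilon_\tau)\tau_{k-1},\tau_{k,\mathrm{trial}}\}$. 4. With $\Delta q_k(s,\tau):=-\tau(g_k^Ts+\tfrac1{2\alpha_k}\|s\|_2^2+r(x_k+s)-r_k)+\|c_k\|_2-\|c_k+J_ks\|_2$: if $\Phi_{\tau_k}(x_k+s_k)\le\Phi_{\tau_k}(x_k)-\eta\Delta q_k(s_k,\tau_k)$ set $x_{k+1}=x_k+s_k$, $\alpha_{k+1}=\alpha_k$; else $x_{k+1}=x_k$, $\alpha_{k+1}=\xi\alpha_k$. Standing assumption: there is an open convex set $\mathcal X$ containing all iterates $x_k$ and trial points $x_k+s_k$ such that $f$ is bounded below on $\mathcal X$, $\nabla f$ is bounded and Lipschitz continuous on $\mathcal X$, $c$ is bounded on $\mathcal X$, $J$ is bounded and Lipschitz continuous on $\mathcal X$, and all subgradients of $r$ at points of $\mathcal X$ are uniformly bounded in norm. *)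

theory Defs
  imports "HOL-Analysis.Analysis"
begin

definition merit :: "(real^'n \<Rightarrow> real) \<Rightarrow> (real^'n \<Rightarrow> real) \<Rightarrow> (real^'n \<Rightarrow> real^'m)
    \<Rightarrow> real \<Rightarrow> real^'n \<Rightarrow> real" where
  "merit f r c tau x = tau * (f x + r x) + norm (c x)"

definition delta_q :: "(real^'n \<Rightarrow> real^'n) \<Rightarrow> (real^'n \<Rightarrow> real) \<Rightarrow> (real^'n \<Rightarrow> real^'m)
    \<Rightarrow> (real^'n \<Rightarrow> real^'n^'m) \<Rightarrow> real^'n \<Rightarrow> real \<Rightarrow> real^'n \<Rightarrow> real \<Rightarrow> real" where
  "delta_q g r c J xk alpha s tau =
     - tau * (g xk \<bullet> s + (1 / (2 * alpha)) * (norm s)\<^sup>2 + r (xk + s) - r xk)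
     + norm (c xk) - norm (c xk + J xk *v s)"

text \<open>The quantity D_k (with bar sigma_u = sigma_u + 1/2).\<close>
definition D_val :: "(real^'n \<Rightarrow> real^'n) \<Rightarrow> (real^'n \<Rightarrow> real) \<Rightarrow> real
    \<Rightarrow> real^'n \<Rightarrow> real \<Rightarrow> real^'n \<Rightarrow> real" where
  "D_val g r sigma_u xk alpha s =
     g xk \<bullet> s + (sigma_u + 1/2) * (norm s)\<^sup>2 / alpha + r (xk + s) - r xk"

definition tau_trial :: "real \<Rightarrow> real \<Rightarrow> real \<Rightarrow> ereal" where
  "tau_trial sigma_c num D = (if D \<le> 0 then \<infinity> else ereal ((1 - sigma_c) * num / D))"

definition tau_update :: "real \<Rightarrow> real \<Rightarrow> ereal \<Rightarrow> real" where
  "tau_update eps_tau tau_prev trial =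
     (if ereal tau_prev \<le> trial then tau_prev
      else min ((1 - eps_tau) * tau_prev) (real_of_ereal trial))"

definition is_subgrad :: "(real^'n \<Rightarrow> real) \<Rightarrow> real^'n \<Rightarrow> real^'n \<Rightarrow> bool" where
  "is_subgrad r x z \<longleftrightarrow> (\<forall>y. r y \<ge> r x + z \<bullet> (y - x))"

end

theory Submission
  imports Defs
begin

text \<open>
  It suffices that every trial value \<open>\<tau>\<^sub>k,trial\<close> is positive (possibly \<open>\<infinity>\<close>): the update
  rule then keeps \<open>\<tau>\<^sub>k\<close> positive and never increases it.  If \<open>J\<^sub>k\<^sup>T c\<^sub>k \<noteq> 0\<close>, the Cauchy step
  strictly decreases the linearised constraint violation, so the numerator of \<open>\<tau>\<^sub>k,trial\<close>
  is positive.  Otherwise \<open>v\<^sub>k = 0\<close>, and since \<open>u\<^sub>k\<close> minimises a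
  \<open>1/\<alpha>\<^sub>k\<close>-strongly convex model over the null space of \<open>J\<^sub>k\<close>, comparing it with \<open>t u\<^sub>k\<close> and letting \<open>t \<rightarrow> 1\<close>
  gives \<open>g\<^sub>k\<^sup>T u\<^sub>k + r(x\<^sub>k + u\<^sub>k) - r\<^sub>k \<le> -\<parallel>u\<^sub>k\<parallel>\<^sup>2/\<alpha>\<^sub>k\<close>, whence \<open>D\<^sub>k \<le> 0\<close> because \<open>\<sigma>\<^sub>u \<le> 1/2\<close>.
\<close>

lemma prox_minimizer_descent:
  fixes G u x :: "'a::real_inner" and r :: "'a \<Rightarrow> real"
  assumes alpha: "alpha > 0" and r_convex: "convex_on UNIV r"
    and S: "subspace S" "u \<in> S"
    and minimizer: "\<And>w. w \<in> S \<Longrightarrow>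
      G \<bullet> u + (1 / (2 * alpha)) * (norm u)\<^sup>2 + r (x + u)
      \<le> G \<bullet> w + (1 / (2 * alpha)) * (norm w)\<^sup>2 + r (x + w)"
  shows "G \<bullet> u + r (x + u) - r x \<le> - (norm u)\<^sup>2 / alpha"
proof -
  define A where "A = G \<bullet> u + r (x + u) - r x"
  define B where "B = (norm u)\<^sup>2 / (2 * alpha)"
  have bound: "A \<le> - (1 + t) * B" if t: "0 \<le> t" "t < 1" for t
  proof -
    have "r (x + t *\<^sub>R u) \<le> (1 - t) * r x + t * r (x + u)"
      using convex_onD[OF r_convex, of t x "x + u"] t by (simp add: algebra_simps)
    moreover have "G \<bullet> u + (1 / (2 * alpha)) * (norm u)\<^sup>2 + r (x + u)
        \<le> G \<bullet> (t *\<^sub>R u) + (1 / (2 * alpha)) * (norm (t *\<^sub>R u))\<^sup>2 + r (x + t *\<^sub>R u)"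
      by (intro minimizer subspace_scale S)
    ultimately have "A + B \<le> t * A + t\<^sup>2 * B"
      unfolding A_def B_def by (simp add: power_mult_distrib algebra_simps)
    then have "(1 - t) * A \<le> (1 - t) * (- (1 + t) * B)"
      by (simp add: algebra_simps power2_eq_square)
    then show ?thesis using t by simp
  qed
  have "((\<lambda>t. - (1 + t) * B) \<longlongrightarrow> - (1 + 1) * B) (at_left 1)"
    by (intro tendsto_intros)
  moreover have "eventually (\<lambda>t. A \<le> - (1 + t) * B) (at_left (1::real))"
    unfolding eventually_at_left_field by (intro exI[of _ 0] conjI allI impI bound) auto
  ultimately have "A \<le> - (1 + 1) * B"
    by (rule tendsto_lowerbound) simp
  then show ?thesis using alpha by (simp add: A_def B_def)
qed

lemma D_val_nonpos:
  assumes "alpha > 0" "sigma_u \<le> 1/2"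
    and "g xk \<bullet> s + r (xk + s) - r xk \<le> - (norm s)\<^sup>2 / alpha"
  shows "D_val g r sigma_u xk alpha s \<le> 0"
proof -
  have "(sigma_u + 1/2) * ((norm s)\<^sup>2 / alpha) \<le> 1 * ((norm s)\<^sup>2 / alpha)"
    using assms(1,2) by (intro mult_right_mono) auto
  then show ?thesis using assms(3) unfolding D_val_def by simp
qed

lemma norm_diff_scaleR_less:
  fixes b c :: "'a::real_inner"
  assumes "0 < beta" "beta * (norm b)\<^sup>2 < 2 * (c \<bullet> b)"
  shows "norm (c - beta *\<^sub>R b) < norm c"
proof -
  have "(norm (c - beta *\<^sub>R b))\<^sup>2 = (c - beta *\<^sub>R b) \<bullet> (c - beta *\<^sub>R b)"
    by (rule power2_norm_eq_inner)
  also have "\<dots> = c \<bullet> c - beta * (2 * (c \<bullet> b) - beta * (b \<bullet> b))"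
    by (simp add: inner_diff_left inner_diff_right inner_commute algebra_simps)
  also have "\<dots> = (norm c)\<^sup>2 - beta * (2 * (c \<bullet> b) - beta * (norm b)\<^sup>2)"
    by (simp add: power2_norm_eq_inner)
  also have "\<dots> < (norm c)\<^sup>2" using assms by simp
  finally show ?thesis by (simp add: power_less_imp_less_base)
qed

lemma exists_descent_stepsize:
  fixes b c :: "'a::real_inner"
  assumes "c \<bullet> b > 0" "K > 0"
  shows "\<exists>beta. 0 < beta \<and> beta \<le> K \<and> beta * (norm b)\<^sup>2 < 2 * (c \<bullet> b)"
proof (intro exI conjI)
  define q where "q = (c \<bullet> b) / ((norm b)\<^sup>2 + 1)"
  have denom: "(norm b)\<^sup>2 + 1 > 0" by (simp add: add_nonneg_pos)
  then have q: "q > 0" using assms(1) by (simp add: q_def)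
  show "0 < min K q" "min K q \<le> K" using q assms(2) by auto
  have "min K q * (norm b)\<^sup>2 \<le> q * (norm b)\<^sup>2" by (simp add: mult_right_mono)
  also have "\<dots> < q * ((norm b)\<^sup>2 + 1)" using q by simp
  also have "\<dots> = c \<bullet> b" using denom by (simp add: q_def)
  finally show "min K q * (norm b)\<^sup>2 < 2 * (c \<bullet> b)" using assms(1) by simp
qed

lemma minimizer_on_interval_decreases_norm:
  fixes b c :: "'a::real_inner"
  assumes "c \<bullet> b > 0" "K > 0" "0 \<le> beta_c" "beta_c \<le> K"
    and minimizer: "\<forall>beta. 0 \<le> beta \<and> beta \<le> K \<longrightarrow>
      (1/2) * (norm (c - beta *\<^sub>R b))\<^sup>2 \<ge> (1/2) * (norm (c - beta_c *\<^sub>R b))\<^sup>2"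
  shows "norm (c - beta_c *\<^sub>R b) < norm c"
proof -
  obtain beta where beta: "0 < beta" "beta \<le> K" "beta * (norm b)\<^sup>2 < 2 * (c \<bullet> b)"
    using exists_descent_stepsize[OF assms(1,2)] by blast
  have "norm (c - beta_c *\<^sub>R b) \<le> norm (c - beta *\<^sub>R b)"
    using minimizer beta by (auto simp: power_mono_iff)
  also have "\<dots> < norm c" using norm_diff_scaleR_less beta by blast
  finally show ?thesis .
qed

lemma cauchy_step_decreases_norm:
  fixes J :: "real^'n^'m" and c :: "real^'m"
  assumes "transpose J *v c \<noteq> 0" "K > 0" "0 \<le> beta_c" "beta_c \<le> K"
    and "\<forall>beta. 0 \<le> beta \<and> beta \<le> K \<longrightarrow>
      (1/2) * (norm (c - beta *\<^sub>R (J *v (transpose J *v c))))\<^sup>2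
      \<ge> (1/2) * (norm (c - beta_c *\<^sub>R (J *v (transpose J *v c))))\<^sup>2"
  shows "norm (c + J *v (- beta_c *\<^sub>R (transpose J *v c))) < norm c"
proof -
  have "c \<bullet> (J *v (transpose J *v c)) = (norm (transpose J *v c))\<^sup>2"
    by (simp add: transpose_matrix_vector dot_lmul_matrix[symmetric] power2_norm_eq_inner)
  then have "c \<bullet> (J *v (transpose J *v c)) > 0" using assms(1) by simp
  moreover have "J *v (- beta_c *\<^sub>R (transpose J *v c)) = - beta_c *\<^sub>R (J *v (transpose J *v c))"
    by (rule matrix_vector_mult_scaleR)
  ultimately show ?thesis using minimizer_on_interval_decreases_norm[OF _ assms(2-)] by simp

qed

lemma tau_trial_pos:
  assumes "sigma_c < 1" "D \<le> 0 \<or> 0 < num"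
  shows "0 < tau_trial sigma_c num D"
  using assms by (auto simp: tau_trial_def)

lemma tau_update_pos_le:
  assumes "prev > 0" "trial > 0" "0 \<le> eps" "eps < 1"
  shows "0 < tau_update eps prev trial \<and> tau_update eps prev trial \<le> prev"
proof (cases "ereal prev \<le> trial")
  case False
  with assms(2) obtain t where "trial = ereal t" "t > 0"
    by (cases trial) auto
  then show ?thesis using False assms by (auto simp: tau_update_def min_def mult_le_cancel_right1)
qed (use assms in \<open>simp add: tau_update_def\<close>)

lemma tau_update_sequence_pos_nonincreasing:
  fixes tau trial :: "nat \<Rightarrow> _"
  assumes "tau_m1 > 0" "0 \<le> eps" "eps < 1" "\<And>k. trial k > 0"
    and "\<And>k. tau k = tau_update eps (if k = 0 then tau_m1 else tau (k - 1)) (trial k)"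
  shows "0 < tau k \<and> tau k \<le> (if k = 0 then tau_m1 else tau (k - 1))"
proof (induction k)
  case 0
  show ?case using tau_update_pos_le[OF assms(1,4,2,3)] assms(5)[of 0] by simp
next
  case (Suc k)
  then show ?case using tau_update_pos_le[OF _ assms(4,2,3)] assms(5)[of "Suc k"] by simp
qed

theorem lemma3p8:
  fixes f :: "real^'n \<Rightarrow> real" and g :: "real^'n \<Rightarrow> real^'n"
    and c :: "real^'n \<Rightarrow> real^'m" and J :: "real^'n \<Rightarrow> real^'n^'m"
    and r :: "real^'n \<Rightarrow> real"
    and x v u :: "nat \<Rightarrow> real^'n" and alpha tau :: "nat \<Rightarrow> real"
    and tau_m1 kappa_v sigma_c eps_tau xi eta sigma_u :: real
  assumes m_le_n: "CARD('m) \<le> CARD('n)"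
    and f_deriv: "\<And>y. (f has_derivative (\<lambda>h. g y \<bullet> h)) (at y)"
    and g_cont: "continuous_on UNIV g"
    and c_deriv: "\<And>y. (c has_derivative (\<lambda>h. J y *v h)) (at y)"
    and J_cont: "continuous_on UNIV J"
    and r_convex: "convex_on UNIV r"
    and r_nonneg: "\<And>y. r y \<ge> 0"
    and alpha0: "alpha 0 > 0"
    and tau_m1_pos: "tau_m1 > 0"
    and kappa_v: "kappa_v > 0"
    and sigma_c: "0 < sigma_c" "sigma_c < 1"
    and eps_tau: "0 < eps_tau" "eps_tau < 1"
    and xi: "0 < xi" "xi < 1"
    and eta: "0 < eta" "eta < 1"
    and sigma_u: "0 < sigma_u" "sigma_u \<le> 1/2"
    and standing: "\<exists>X. open X \<and> convex X
        \<and> (\<forall>k. x k \<in> X \<and> x k + (v k + u k) \<in> X)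
        \<and> bdd_below (f ` X)
        \<and> bounded (g ` X) \<and> (\<exists>L. \<forall>y\<in>X. \<forall>z\<in>X. norm (g y - g z) \<le> L * norm (y - z))
        \<and> bounded (c ` X)
        \<and> bounded (J ` X) \<and> (\<exists>L. \<forall>y\<in>X. \<forall>z\<in>X. norm (J y - J z) \<le> L * norm (y - z))
        \<and> (\<exists>G. \<forall>y\<in>X. \<forall>w. is_subgrad r y w \<longrightarrow> norm w \<le> G)"
    and step1_nz: "\<And>k. transpose (J (x k)) *v c (x k) \<noteq> 0 \<Longrightarrow>
        (\<exists>w. v k = transpose (J (x k)) *v w)
        \<and> norm (v k) \<le> kappa_v * alpha k * norm (transpose (J (x k)) *v c (x k))
        \<and> (\<exists>beta_c. 0 \<le> beta_c \<and> beta_c \<le> kappa_v * alpha k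
             \<and> (\<forall>beta. 0 \<le> beta \<and> beta \<le> kappa_v * alpha k \<longrightarrow>
                  (1/2) * (norm (c (x k) - beta *\<^sub>R (J (x k) *v (transpose (J (x k)) *v c (x k)))))\<^sup>2
                  \<ge> (1/2) * (norm (c (x k) - beta_c *\<^sub>R (J (x k) *v (transpose (J (x k)) *v c (x k)))))\<^sup>2)
             \<and> norm (c (x k) + J (x k) *v v k)
                 \<le> norm (c (x k) + J (x k) *v (- beta_c *\<^sub>R (transpose (J (x k)) *v c (x k)))))"
    and step1_z: "\<And>k. transpose (J (x k)) *v c (x k) = 0 \<Longrightarrow> v k = 0"
    and no_term1: "\<And>k. transpose (J (x k)) *v c (x k) = 0 \<Longrightarrow> c (x k) = 0"
    and step2: "\<And>k. J (x k) *v u k = 0 \<and>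
        (\<forall>w. J (x k) *v w = 0 \<longrightarrow>
           g (x k) \<bullet> u k + (1 / (2 * alpha k)) * (norm (u k))\<^sup>2 + r (x k + v k + u k)
           \<le> g (x k) \<bullet> w + (1 / (2 * alpha k)) * (norm w)\<^sup>2 + r (x k + v k + w))"
    and no_term2: "\<And>k. v k + u k \<noteq> 0"
    and step3: "\<And>k. tau k = tau_update eps_tau (if k = 0 then tau_m1 else tau (k - 1))
        (tau_trial sigma_c (norm (c (x k)) - norm (c (x k) + J (x k) *v v k))
           (D_val g r sigma_u (x k) (alpha k) (v k + u k)))"
    and step4: "\<And>k. (merit f r c (tau k) (x k + (v k + u k))
                  \<le> merit f r c (tau k) (x k) - eta * delta_q g r c J (x k) (alpha k) (v k + u k) (tau k)
                 \<longrightarrow> x (Suc k) = x k + (v k + u k) \<and> alpha (Suc k) = alpha k)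
        \<and> (\<not> merit f r c (tau k) (x k + (v k + u k))
                  \<le> merit f r c (tau k) (x k) - eta * delta_q g r c J (x k) (alpha k) (v k + u k) (tau k)
                 \<longrightarrow> x (Suc k) = x k \<and> alpha (Suc k) = xi * alpha k)"
  shows "\<forall>k\<ge>1. 0 < tau k \<and> tau k \<le> tau (k - 1)"
proof -
  have alpha_pos: "alpha k > 0" for k
  proof (induction k)
    case (Suc k)
    have "alpha (Suc k) = alpha k \<or> alpha (Suc k) = xi * alpha k" using step4[of k] by blast
    then show ?case using Suc xi(1) by auto
  qed (rule alpha0)
  have trial_pos: "0 < tau_trial sigma_c (norm (c (x k)) - norm (c (x k) + J (x k) *v v k))
      (D_val g r sigma_u (x k) (alpha k) (v k + u k))" for k
  proof (cases "transpose (J (x k)) *v c (x k) = 0")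
    case True
    then have v0: "v k = 0" using step1_z by blast
    have "subspace {w. J (x k) *v w = 0}"
      by (auto simp: subspace_def matrix_vector_right_distrib matrix_vector_mult_scaleR)
    then have "g (x k) \<bullet> u k + r (x k + u k) - r (x k) \<le> - (norm (u k))\<^sup>2 / alpha k"
      using step2[of k] v0 by (intro prox_minimizer_descent[OF alpha_pos r_convex]) auto
    then have "D_val g r sigma_u (x k) (alpha k) (v k + u k) \<le> 0"
      using v0 alpha_pos sigma_u(2) by (simp add: D_val_nonpos)
    then show ?thesis using sigma_c(2) by (simp add: tau_trial_pos)
  next
    case False
    have "kappa_v * alpha k > 0" using kappa_v alpha_pos by simp
    then have "norm (c (x k) + J (x k) *v v k) < norm (c (x k))"
      using step1_nz[OF False] cauchy_step_decreases_norm[OF False] by (meson order_le_less_trans)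
    then show ?thesis using sigma_c(2) by (simp add: tau_trial_pos)
  qed
  have "0 < tau k \<and> tau k \<le> (if k = 0 then tau_m1 else tau (k - 1))" for k
    using tau_update_sequence_pos_nonincreasing[OF tau_m1_pos _ eps_tau(2) trial_pos step3] eps_tau(1)
    by simp
  then show ?thesis by (metis not_one_le_zero)
qed

end
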